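(* Let $\alpha\in[0,1)$, $K_\alpha(x,y)=\dfrac{1}{x^2+2\cos(\pi\alpha)xy+y^2}$ and $Q_\alpha(x,y)=y+x\cos(\pi\alpha)$ for $x,y>0$. For integers $p\ge0$ define $$T_{\alpha,2p}=(2p)!\sum_{k=0}^p(-1)^{p-k}\binom{p+k}{p-k}(4Q_\alpha^2)^kK_\alpha^{p+k+1},\qquad T_{\alpha,2p+1}=2(2p+1)!\,Q_\alpha\sum_{k=0}^p(-1)^{p+1-k}\binom{p+1+k}{p-k}(4Q_\alpha^2)^kK_\alpha^{p+k+2}.$$ Then for every $n\ge0$, $\dfrac{\partial^nK_\alpha}{\partial y^n}=T_{\alpha,n}$. *)

theory Defs
  imports "HOL-Analysis.Analysis"
begin

definition K :: "real \<Rightarrow> real \<Rightarrow> real \<Rightarrow> real" where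
  "K \<alpha> x y = 1 / (x^2 + 2 * cos (pi * \<alpha>) * x * y + y^2)"

definition Q :: "real \<Rightarrow> real \<Rightarrow> real \<Rightarrow> real" where
  "Q \<alpha> x y = y + x * cos (pi * \<alpha>)"

definition T :: "real \<Rightarrow> nat \<Rightarrow> real \<Rightarrow> real \<Rightarrow> real" where
  "T \<alpha> n x y =
    (if even n then
       (let p = n div 2 in
        fact (2*p) * (\<Sum>k=0..p. (-1)^(p-k) * real ((p+k) choose (p-k))
            * (4 * (Q \<alpha> x y)^2)^k * (K \<alpha> x y)^(p+k+1)))
     else
       (let p = n div 2 in
        2 * fact (2*p+1) * Q \<alpha> x y * (\<Sum>k=0..p. (-1)^(p+1-k) * real ((p+1+k) choose (p-k))
            * (4 * (Q \<alpha> x y)^2)^k * (K \<alpha> x y)^(p+k+2))))"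

end

theory Submission
  imports Defs
begin

text \<open>
  For fixed x we have Q' = 1 and K' = -2 Q K^2 (derivatives in y). Write
  T_{2p} = (2p)! E_p and T_{2p+1} = 2 (2p+1)! O_p, where E_p and O_p are linear combinations
  of the monomials (4Q^2)^k K^(p+k+1) and Q (4Q^2)^k K^(p+k+2) respectively. These two rules
  alone give E_p' = 2 (2p+1) O_p and O_p' = (p+1) E_(p+1): after an index shift, comparing
  coefficients of the monomials reduces both to a single absorption identity for binomial
  coefficients.
\<close>

lemma choose_two_step_identity:
  "2 * (m + 2) * (n choose (m + 2)) + (m + 1) * (n choose (m + 1)) + n * ((n - 1) choose m)
     = 2 * n * (n choose (m + 1))"
proof -
  have upper: "(m + 2) * (n choose (m + 2)) = (n - (m + 1)) * (n choose (m + 1))"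
    using binomial_absorb_comp[of n "m + 1"] binomial_absorption[of "m + 1" n] by simp
  have lower: "n * ((n - 1) choose m) = (m + 1) * (n choose (m + 1))"
    using binomial_absorption[of m n] by simp
  show ?thesis
  proof (cases "m + 1 \<le> n")
    case True
    then obtain d where "n = m + 1 + d" using le_Suc_ex by blast
    then show ?thesis unfolding mult.assoc upper lower by (simp add: algebra_simps)
  next
    case False
    then show ?thesis by (auto simp: binomial_eq_0)
  qed
qed

text \<open>
  For \<open>k \<le> p\<close> these are the coefficients of the statement, but written with
  \<open>(p+k) choose 2k\<close> instead of \<open>(p+k) choose (p-k)\<close>, so that they vanish for \<open>k > p\<close>
  (truncated subtraction would give \<open>(p+k) choose 0 = 1\<close>); this removes all boundary
  terms from the index shifts below.
\<close>

definition even_coeff :: "nat \<Rightarrow> nat \<Rightarrow> real" where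
  "even_coeff p k = (-1) ^ (p + k) * real ((p + k) choose (2 * k))"

definition odd_coeff :: "nat \<Rightarrow> nat \<Rightarrow> real" where
  "odd_coeff p k = (-1) ^ (p + k + 1) * real ((p + k + 1) choose (2 * k + 1))"

lemma even_coeff_eq_0: "p < k \<Longrightarrow> even_coeff p k = 0"
  unfolding even_coeff_def by (subst binomial_eq_0) auto

lemma odd_coeff_eq_0: "p < k \<Longrightarrow> odd_coeff p k = 0"
  unfolding odd_coeff_def by (subst binomial_eq_0) auto

lemma even_coeff_0: "even_coeff p 0 = (-1) ^ p"
  by (simp add: even_coeff_def)

lemma odd_coeff_0: "odd_coeff p 0 = (-1) ^ (p + 1) * real (p + 1)"
  by (simp add: odd_coeff_def)

lemma even_coeff_eq_binomial:
  assumes "k \<le> p"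
  shows "even_coeff p k = (-1) ^ (p - k) * real ((p + k) choose (p - k))"
proof -
  obtain d where "p = k + d" using assms le_Suc_ex by blast
  then have "p + k = d + 2 * k" "p - k = d" by simp_all
  moreover have "(d + 2 * k) choose d = (d + 2 * k) choose (2 * k)"
    using binomial_symmetric[of d "d + 2 * k"] by simp
  ultimately show ?thesis
    unfolding even_coeff_def by (simp only:) (simp add: power_add power_mult)
qed

lemma odd_coeff_eq_binomial:
  assumes "k \<le> p"
  shows "odd_coeff p k = (-1) ^ (p + 1 - k) * real ((p + 1 + k) choose (p - k))"
proof -
  obtain d where "p = k + d" using assms le_Suc_ex by blast
  then have "p + k + 1 = d + 2 * k + 1" "p + 1 + k = d + 2 * k + 1" "p + 1 - k = d + 1" "p - k = d"
    by simp_all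
  moreover have "(d + 2 * k + 1) choose d = (d + 2 * k + 1) choose (2 * k + 1)"
    using binomial_symmetric[of d "d + 2 * k + 1"] by simp
  ultimately show ?thesis
    unfolding odd_coeff_def by (simp only:) (simp add: power_add power_mult)
qed

lemma even_coeff_recurrence:
  "4 * real (j + 1) * even_coeff p (j + 1) - real (p + j + 1) * even_coeff p j
     = real (2 * p + 1) * odd_coeff p j"
proof -
  define n where "n = p + j + 1"
  define A where "A = real (n choose (2 * j + 2))"
  define B where "B = real ((n - 1) choose (2 * j))"
  define C where "C = real (n choose (2 * j + 1))"
  define \<sigma> :: real where "\<sigma> = (-1) ^ (p + j)"
  have "real (2 * (2 * j + 2) * (n choose (2 * j + 2)) + (2 * j + 1) * (n choose (2 * j + 1))
          + n * ((n - 1) choose (2 * j))) = real (2 * n * (n choose (2 * j + 1)))"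
    using choose_two_step_identity[of "2 * j" n] by simp
  then have binomials: "4 * real (j + 1) * A + real (p + j + 1) * B = real (2 * p + 1) * C"
    unfolding A_def B_def C_def by (simp add: n_def algebra_simps del: binomial_Suc_Suc)
  have "even_coeff p (j + 1) = - \<sigma> * A" "even_coeff p j = \<sigma> * B" "odd_coeff p j = - \<sigma> * C"
    unfolding even_coeff_def odd_coeff_def A_def B_def C_def n_def \<sigma>_def by simp_all
  then have "4 * real (j + 1) * even_coeff p (j + 1) - real (p + j + 1) * even_coeff p j
      = - \<sigma> * (4 * real (j + 1) * A + real (p + j + 1) * B)"
    by (simp add: algebra_simps)
  also have "\<dots> = real (2 * p + 1) * odd_coeff p j"
    unfolding binomials \<open>odd_coeff p j = - \<sigma> * C\<close> by simp
  finally show ?thesis .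
qed

lemma odd_coeff_recurrence:
  "2 * real (2 * j + 3) * odd_coeff p (j + 1) - real (p + j + 2) * odd_coeff p j
     = real (2 * p + 2) * even_coeff (p + 1) (j + 1)"
proof -
  define n where "n = p + j + 2"
  define A where "A = real (n choose (2 * j + 1 + 2))"
  define B where "B = real ((n - 1) choose (2 * j + 1))"
  define C where "C = real (n choose (2 * j + 1 + 1))"
  define \<sigma> :: real where "\<sigma> = (-1) ^ (p + j)"
  have "real (2 * (2 * j + 1 + 2) * (n choose (2 * j + 1 + 2)) + (2 * j + 1 + 1) * (n choose (2 * j + 1 + 1))
          + n * ((n - 1) choose (2 * j + 1))) = real (2 * n * (n choose (2 * j + 1 + 1)))"
    using choose_two_step_identity[of "2 * j + 1" n] by simp
  then have binomials: "2 * real (2 * j + 3) * A + real (p + j + 2) * B = real (2 * p + 2) * C"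
    unfolding A_def B_def C_def by (simp add: n_def algebra_simps del: binomial_Suc_Suc)
  have "odd_coeff p (j + 1) = \<sigma> * A" "odd_coeff p j = - \<sigma> * B" "even_coeff (p + 1) (j + 1) = \<sigma> * C"
    unfolding even_coeff_def odd_coeff_def A_def B_def C_def n_def \<sigma>_def by simp_all
  then have "2 * real (2 * j + 3) * odd_coeff p (j + 1) - real (p + j + 2) * odd_coeff p j
      = \<sigma> * (2 * real (2 * j + 3) * A + real (p + j + 2) * B)"
    by (simp add: algebra_simps)
  also have "\<dots> = real (2 * p + 2) * even_coeff (p + 1) (j + 1)"
    unfolding binomials \<open>even_coeff (p + 1) (j + 1) = \<sigma> * C\<close> by simp
  finally show ?thesis .
qed

lemma sum_atMost_shift:
  fixes f :: "nat \<Rightarrow> 'a::comm_monoid_add"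
  assumes "f (Suc p) = 0"
  shows "(\<Sum>k\<le>p. f k) = f 0 + (\<Sum>k\<le>p. f (Suc k))"
proof -
  have "(\<Sum>k\<le>p. f k) = (\<Sum>k\<le>Suc p. f k)" using assms by simp
  then show ?thesis by (simp only: sum.atMost_Suc_shift)
qed

definition even_part :: "nat \<Rightarrow> real \<Rightarrow> real \<Rightarrow> real" where
  "even_part p q w = (\<Sum>k\<le>p. even_coeff p k * ((4 * q^2) ^ k * w ^ (p + k + 1)))"

definition odd_part :: "nat \<Rightarrow> real \<Rightarrow> real \<Rightarrow> real" where
  "odd_part p q w = (\<Sum>k\<le>p. odd_coeff p k * (q * (4 * q^2) ^ k * w ^ (p + k + 2)))"

lemma T_even_eq: "T \<alpha> (2 * p) x y = fact (2 * p) * even_part p (Q \<alpha> x y) (K \<alpha> x y)"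
proof -
  have "(\<Sum>k=0..p. (-1) ^ (p - k) * real ((p + k) choose (p - k)) * (4 * (Q \<alpha> x y)^2) ^ k * (K \<alpha> x y) ^ (p + k + 1))
      = even_part p (Q \<alpha> x y) (K \<alpha> x y)"
    unfolding even_part_def atLeast0AtMost by (intro sum.cong) (simp_all add: even_coeff_eq_binomial)
  then show ?thesis by (simp add: T_def)
qed

lemma T_odd_eq: "T \<alpha> (2 * p + 1) x y = 2 * fact (2 * p + 1) * odd_part p (Q \<alpha> x y) (K \<alpha> x y)"
proof -
  have "Q \<alpha> x y * (\<Sum>k=0..p. (-1) ^ (p + 1 - k) * real ((p + 1 + k) choose (p - k)) * (4 * (Q \<alpha> x y)^2) ^ k * (K \<alpha> x y) ^ (p + k + 2))
      = odd_part p (Q \<alpha> x y) (K \<alpha> x y)"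
    unfolding odd_part_def atLeast0AtMost sum_distrib_left
    by (intro sum.cong) (simp_all add: odd_coeff_eq_binomial)
  then show ?thesis by (simp add: T_def mult.assoc)
qed

lemma has_real_derivative_monomial:
  fixes q w :: "real \<Rightarrow> real"
  assumes q: "(q has_real_derivative 1) (at t)"
    and w: "(w has_real_derivative - 2 * q t * w t ^ 2) (at t)"
  shows "((\<lambda>t. (4 * q t ^ 2) ^ k * w t ^ n) has_real_derivative
     2 * q t * (4 * real k * (4 * q t ^ 2) ^ (k - 1) * w t ^ n
                - real n * (4 * q t ^ 2) ^ k * w t ^ (n + 1))) (at t)"
  by (rule derivative_eq_intros q w refl | simp)+
    (cases n; simp add: algebra_simps power2_eq_square)

lemma has_real_derivative_odd_monomial:
  fixes q w :: "real \<Rightarrow> real"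
  assumes q: "(q has_real_derivative 1) (at t)"
    and w: "(w has_real_derivative - 2 * q t * w t ^ 2) (at t)"
  shows "((\<lambda>t. q t * (4 * q t ^ 2) ^ k * w t ^ n) has_real_derivative
     (1 + 2 * real k) * (4 * q t ^ 2) ^ k * w t ^ n
     - real n / 2 * (4 * q t ^ 2) ^ (k + 1) * w t ^ (n + 1)) (at t)"
  by (rule derivative_eq_intros q w refl | simp)+
    (cases n; cases k; simp add: algebra_simps power2_eq_square)

lemma has_real_derivative_even_part:
  fixes q w :: "real \<Rightarrow> real"
  assumes q: "(q has_real_derivative 1) (at t)"
    and w: "(w has_real_derivative - 2 * q t * w t ^ 2) (at t)"
  shows "((\<lambda>t. even_part p (q t) (w t)) has_real_derivative
     2 * real (2 * p + 1) * odd_part p (q t) (w t)) (at t)"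
proof -
  define X where "X = 4 * q t ^ 2"
  define M where "M j = X ^ j * w t ^ (p + j + 2)" for j
  define D where "D = (\<Sum>k\<le>p. even_coeff p k * (2 * q t *
      (4 * real k * X ^ (k - 1) * w t ^ (p + k + 1) - real (p + k + 1) * X ^ k * w t ^ (p + k + 1 + 1))))"
  have deriv: "((\<lambda>t. even_part p (q t) (w t)) has_real_derivative D) (at t)"
    unfolding even_part_def D_def X_def
    by (intro DERIV_sum DERIV_cmult has_real_derivative_monomial q w)
  have "D = 2 * q t * ((\<Sum>k\<le>p. 4 * real k * even_coeff p k * X ^ (k - 1) * w t ^ (p + k + 1))
      - (\<Sum>k\<le>p. real (p + k + 1) * even_coeff p k * M k))"
    unfolding D_def M_def by (simp add: sum_distrib_left algebra_simps flip: sum_subtractf)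
  also have "\<dots> = 2 * q t * ((\<Sum>k\<le>p. 4 * real (k + 1) * even_coeff p (k + 1) * M k)
      - (\<Sum>k\<le>p. real (p + k + 1) * even_coeff p k * M k))"
    by (subst sum_atMost_shift) (simp_all add: even_coeff_eq_0 M_def mult.assoc)
  also have "\<dots> = 2 * q t * (\<Sum>k\<le>p. real (2 * p + 1) * odd_coeff p k * M k)"
    unfolding sum_subtractf[symmetric]
    by (simp only: left_diff_distrib[symmetric] even_coeff_recurrence)
  also have "\<dots> = 2 * real (2 * p + 1) * odd_part p (q t) (w t)"
    unfolding odd_part_def M_def X_def by (simp add: sum_distrib_left algebra_simps)
  finally show ?thesis using deriv by simp
qed

lemma has_real_derivative_odd_part:
  fixes q w :: "real \<Rightarrow> real"
  assumes q: "(q has_real_derivative 1) (at t)"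
    and w: "(w has_real_derivative - 2 * q t * w t ^ 2) (at t)"
  shows "((\<lambda>t. odd_part p (q t) (w t)) has_real_derivative
     real (p + 1) * even_part (p + 1) (q t) (w t)) (at t)"
proof -
  define X where "X = 4 * q t ^ 2"
  define N where "N j = X ^ j * w t ^ (p + j + 2)" for j
  define D where "D = (\<Sum>k\<le>p. odd_coeff p k * ((1 + 2 * real k) * X ^ k * w t ^ (p + k + 2)
      - real (p + k + 2) / 2 * X ^ (k + 1) * w t ^ (p + k + 2 + 1)))"
  have deriv: "((\<lambda>t. odd_part p (q t) (w t)) has_real_derivative D) (at t)"
    unfolding odd_part_def D_def X_def
    by (intro DERIV_sum DERIV_cmult has_real_derivative_odd_monomial q w)
  have "2 * D = (\<Sum>k\<le>p. 2 * (2 * real k + 1) * odd_coeff p k * N k)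
      - (\<Sum>k\<le>p. real (p + k + 2) * odd_coeff p k * N (k + 1))"
    unfolding D_def N_def sum_distrib_left sum_subtractf[symmetric]
    by (intro sum.cong refl) (simp add: field_simps)
  also have "\<dots> = 2 * odd_coeff p 0 * N 0
      + ((\<Sum>k\<le>p. 2 * real (2 * k + 3) * odd_coeff p (k + 1) * N (k + 1))
         - (\<Sum>k\<le>p. real (p + k + 2) * odd_coeff p k * N (k + 1)))"
    by (subst sum_atMost_shift) (simp_all add: odd_coeff_eq_0 algebra_simps)
  also have "\<dots> = real (2 * p + 2) * even_coeff (p + 1) 0 * N 0
      + (\<Sum>k\<le>p. real (2 * p + 2) * even_coeff (p + 1) (k + 1) * N (k + 1))"
    unfolding sum_subtractf[symmetric]
    by (simp only: left_diff_distrib[symmetric] odd_coeff_recurrence)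
      (simp add: odd_coeff_0 even_coeff_0)
  also have "\<dots> = 2 * (real (p + 1) * even_part (p + 1) (q t) (w t))"
    unfolding even_part_def N_def X_def
    by (simp add: sum.atMost_Suc_shift sum_distrib_left algebra_simps del: sum.atMost_Suc)
  finally have "D = real (p + 1) * even_part (p + 1) (q t) (w t)"
    by simp
  with deriv show ?thesis by simp
qed

lemma higher_deriv_eq_of_has_field_derivative:
  fixes F :: "nat \<Rightarrow> 'a::real_normed_field \<Rightarrow> 'a"
  assumes "open S"
    and F: "\<And>n t. t \<in> S \<Longrightarrow> (F n has_field_derivative F (Suc n) t) (at t)"
    and "t \<in> S"
  shows "(deriv ^^ n) (F 0) t = F n t"
  using \<open>t \<in> S\<close>
proof (induction n arbitrary: t)
  case 0
  then show ?case by simp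
next
  case (Suc n)
  have "eventually (\<lambda>s. (deriv ^^ n) (F 0) s = F n s) (nhds t)"
    using eventually_nhds_in_open[OF \<open>open S\<close> Suc.prems] by (rule eventually_mono) (rule Suc.IH)
  then have "(deriv ^^ Suc n) (F 0) t = deriv (F n) t"
    by (simp add: deriv_cong_ev)
  also have "\<dots> = F (Suc n) t"
    using F[OF Suc.prems] by (rule DERIV_imp_deriv)
  finally show ?case .
qed

lemma quadratic_form_pos:
  fixes c x t :: real
  assumes "c > -1" "x > 0" "t > 0"
  shows "x^2 + 2 * c * x * t + t^2 > 0"
proof -
  have "x^2 + 2 * c * x * t + t^2 = (x - t)^2 + 2 * ((c + 1) * (x * t))"
    by (simp add: algebra_simps power2_eq_square)
  moreover have "(c + 1) * (x * t) > 0" using assms by simp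
  ultimately show ?thesis using zero_le_power2[of "x - t"] by linarith
qed

lemma cos_pi_gt_minus_one: "0 \<le> \<alpha> \<Longrightarrow> \<alpha> < 1 \<Longrightarrow> cos (pi * \<alpha>) > -1"
  using cos_monotone_0_pi[of "pi * \<alpha>" pi] by simp

lemma has_real_derivative_K:
  assumes "x^2 + 2 * cos (pi * \<alpha>) * x * t + t^2 \<noteq> 0"
  shows "((\<lambda>t. K \<alpha> x t) has_real_derivative - 2 * Q \<alpha> x t * K \<alpha> x t ^ 2) (at t)"
  unfolding K_def Q_def using assms
  by (auto intro!: derivative_eq_intros simp: field_simps power2_eq_square)

lemma has_real_derivative_T:
  assumes "0 \<le> \<alpha>" "\<alpha> < 1" "x > 0" "t > 0"
  shows "(T \<alpha> n x has_real_derivative T \<alpha> (Suc n) x t) (at t)"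
proof -
  have q: "((\<lambda>t. Q \<alpha> x t) has_real_derivative 1) (at t)"
    unfolding Q_def by (auto intro!: derivative_eq_intros)
  have "x^2 + 2 * cos (pi * \<alpha>) * x * t + t^2 > 0"
    using quadratic_form_pos[OF cos_pi_gt_minus_one[OF assms(1,2)] assms(3,4)] .
  then have w: "((\<lambda>t. K \<alpha> x t) has_real_derivative - 2 * Q \<alpha> x t * K \<alpha> x t ^ 2) (at t)"
    by (intro has_real_derivative_K) simp
  obtain p where "n = 2 * p \<or> n = 2 * p + 1"
    by (metis evenE oddE)
  then show ?thesis
  proof
    assume n: "n = 2 * p"
    have T_n: "T \<alpha> n x = (\<lambda>t. fact (2 * p) * even_part p (Q \<alpha> x t) (K \<alpha> x t))"
      unfolding n by (rule ext) (rule T_even_eq)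
    have T_Suc_n: "fact (2 * p) * (2 * real (2 * p + 1) * odd_part p (Q \<alpha> x t) (K \<alpha> x t)) = T \<alpha> (Suc n) x t"
      using T_odd_eq[of \<alpha> p x t] by (simp add: n algebra_simps)
    show ?thesis
      using DERIV_cmult[OF has_real_derivative_even_part[OF q w, of p], of "fact (2 * p)"] unfolding T_n T_Suc_n .
  next
    assume n: "n = 2 * p + 1"
    have T_n: "T \<alpha> n x = (\<lambda>t. 2 * fact (2 * p + 1) * odd_part p (Q \<alpha> x t) (K \<alpha> x t))"
      unfolding n by (rule ext) (rule T_odd_eq)
    have T_Suc_n: "2 * fact (2 * p + 1) * (real (p + 1) * even_part (p + 1) (Q \<alpha> x t) (K \<alpha> x t)) = T \<alpha> (Suc n) x t"
      using T_even_eq[of \<alpha> "p + 1" x t] by (simp add: n algebra_simps)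
    show ?thesis
      using DERIV_cmult[OF has_real_derivative_odd_part[OF q w, of p], of "2 * fact (2 * p + 1)"] unfolding T_n T_Suc_n .
  qed
qed

theorem lemma1:
  fixes \<alpha> x y :: real and n :: nat
  assumes "0 \<le> \<alpha>" "\<alpha> < 1" "x > 0" "y > 0"
  shows "(deriv ^^ n) (\<lambda>t. K \<alpha> x t) y = T \<alpha> n x y"
proof -
  have "(\<lambda>t. K \<alpha> x t) = T \<alpha> 0 x"
    by (simp add: T_def fun_eq_iff)
  moreover have "(deriv ^^ n) (T \<alpha> 0 x) y = T \<alpha> n x y"
    using has_real_derivative_T[OF assms(1-3)] assms(4)
    by (intro higher_deriv_eq_of_has_field_derivative[where S = "{0<..}"]) auto
  ultimately show ?thesis by simp
qed

end
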